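(* Let $(K,\mathrm{val})$ be a $2$-henselian valued field whose residue class field $F$ has characteristic $\neq2$, let $A$ be a subring with $B\subseteq A\subseteq K$ and $H=\mathrm{val}(A^\times)$. Then the map $$\Theta:\mathfrak X_A\to\mathcal T_F^{H\cup G_{\ge e}},\qquad \Theta(\mathcal M)=\big(M_g^A(\mathcal M)\big)_{g\in H\cup G_{\ge e}}$$ is well defined and bijective, with inverse $(M_g)_{g}\mapsto\bigcup_{g\in H\cup G_{\ge e}}\Phi^A(M_g,[\![g]\!])$.
   Context: Let $(G,\le)$ be a totally ordered abelian group written multiplicatively with identity $e$; $G_{\ge e}=\{g\in G:g\ge e\}$, $G^2=\{g^2:g\in G\}$. Let $(K,\mathrm{val})$ be a valued field with surjective valuation $\mathrm{val}:K\to G\cup\{\infty\}$, valuation ring $B=\{x:\mathrm{val}(x)\ge e\}$, residue map $\pi:B\to F$, residue field $F$. A strict unit is $x\in B^\times$ with $\pi(x)=1$; when $\mathrm{char}F\ne2$, $2$-henselian is equivalent to every strict unit being a square in $K$. For a subring $A$ with $B\subseteq A\subseteq K$ put $H=\mathrm{val}(A^\times)$; $H$ is a convex subgroup of $G$ and $\mathrm{val}(A\setminus\{0\})=H\cup G_{\ge e}$. For $g\in G$: $\overline g$ is its class in $G/G^2$, $[\![g]\!]$ its class in $G/H^2$, $[g]$ its class in $G/H$; "$\mathrm{val}(x)=\overline g$" means $\overline{\mathrm{val}(x)}=\overline g$, similarly for $[\![\cdot]\!]$. A quasi-quadratic module in a commutative ring $R$ is a subset $M\subseteq R$ with $M+M\subseteq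 M$ and $a^2M\subseteq M$ for all $a\in R$; $\mathfrak X_R$ is the set of all quasi-quadratic modules in $R$. $\mathcal T_F^{H\cup G_{\ge e}}$ is the set of families $(M_g)_{g\in H\cup G_{\ge e}}\in\prod_{g\in H\cup G_{\ge e}}\mathfrak X_F$ such that $M_g\subseteq M_h$ whenever $[\![g]\!]=[\![h]\!]$, or ($g\le h$ and $\overline g=\overline h$), or ($M_g=F$ and ($[g]=[h]$ or $g\le h$)). A pseudo-angular component map is a map $\mathrm{p.an}:K^\times\to F^\times$ such that: (1) $\mathrm{p.an}(u)=\pi(u)$ for $u\in B^\times$; (2) $\mathrm{p.an}(ux)=\pi(u)\mathrm{p.an}(x)$ for $u\in B^\times,x\in K^\times$; (3) for all $g\in G$, $c\in F^\times$ there is $w\in K$ with $\mathrm{val}(w)=g$, $\mathrm{p.an}(w)=c$; (4) for nonzero $x_1,x_2$ with $x_1+x_2\ne0$: if $\mathrm{val}(x_1)<\mathrm{val}(x_2)$ then $\mathrm{p.an}(x_1+x_2)=\mathrm{p.an}(x_1)$; if $\mathrm{val}(x_1)=\mathrm{val}(x_2)$ and $\mathrm{p.an}(x_1)+\mathrm{p.an}(x_2)\ne0$ then $\mathrm{val}(x_1+x_2)=\mathrm{val}(x_1)$ and $\mathrm{p.an}(x_1+x_2)=\mathrm{p.an}(x_1)+\mathrm{p.an}(x_2)$; (5) if $x,y\in K^\times$, $\overline{\mathrm{val}(x)}=\overline{\mathrm{val}(y)}$ and $\mathrm{p.an}(x)=\mathrm{p.an}(y)$ then $y=u^2x$ for some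 $u\in K^\times$; (6) for $a,u\in K^\times$ there is $k\in F^\times$ with $\mathrm{p.an}(au^2)=\mathrm{p.an}(a)k^2$. Such a map exists under the hypotheses; fix one. For $g\in G$ and a quasi-quadratic module $M$ in $F$: $$\Phi^A(M,[\![g]\!])=\{x\in A\setminus\{0\}:\ \mathrm{val}(x)=\overline g,\ (\mathrm{val}(x)=[\![g]\!]\ \text{or}\ \mathrm{val}(x)>g),\ \mathrm{p.an}(x)\in M\}\cup\{0\}.$$ For a quasi-quadratic module $\mathcal M$ in $A$ and $g\in G$: $M_g^A(\mathcal M)=\{\mathrm{p.an}(x):x\in\mathcal M\setminus\{0\},\ \mathrm{val}(x)=g\}\cup\{0\}$. *)

theory Defs
  imports Main "HOL-Library.FuncSet"
begin

text \<open>Multiplication, e, g^2 of the paper become +, 0, g+g.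
  The valuation is a map val :: 'k => 'g, only meaningful on nonzero elements
  (val 0 = infinity is encoded by always treating 0 separately).\<close>

definition valuation :: "('k::field \<Rightarrow> 'g::linordered_ab_group_add) \<Rightarrow> bool" where
  "valuation v \<longleftrightarrow>
     (\<forall>x y. x \<noteq> 0 \<longrightarrow> y \<noteq> 0 \<longrightarrow> v (x * y) = v x + v y) \<and>
     (\<forall>x y. x \<noteq> 0 \<longrightarrow> y \<noteq> 0 \<longrightarrow> x + y \<noteq> 0 \<longrightarrow> min (v x) (v y) \<le> v (x + y)) \<and>
     (\<forall>g. \<exists>x. x \<noteq> 0 \<and> v x = g)"

definition val_ring :: "('k::field \<Rightarrow> 'g::linordered_ab_group_add) \<Rightarrow> 'k set" where
  "val_ring v = {x. x = 0 \<or> 0 \<le> v x}"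

text \<open>pi is the residue map B -> F, where the residue field F is the whole type 'f:
  a surjective ring homomorphism on B whose kernel is the maximal ideal.\<close>
definition residue_map ::
  "('k::field \<Rightarrow> 'g::linordered_ab_group_add) \<Rightarrow> ('k \<Rightarrow> 'f::field) \<Rightarrow> bool" where
  "residue_map v \<pi> \<longleftrightarrow>
     (\<forall>x\<in>val_ring v. \<forall>y\<in>val_ring v. \<pi> (x + y) = \<pi> x + \<pi> y \<and> \<pi> (x * y) = \<pi> x * \<pi> y) \<and>
     \<pi> 1 = 1 \<and>
     (\<forall>x\<in>val_ring v. \<pi> x = 0 \<longleftrightarrow> (x = 0 \<or> 0 < v x)) \<and>
     (\<forall>c. \<exists>x\<in>val_ring v. \<pi> x = c)"

definition strict_unit :: "('k::field \<Rightarrow> 'g::linordered_ab_group_add) \<Rightarrow> ('k \<Rightarrow> 'f::field) \<Rightarrow> 'k \<Rightarrow> bool" where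
  "strict_unit v \<pi> x \<longleftrightarrow> x \<noteq> 0 \<and> v x = 0 \<and> \<pi> x = 1"

text \<open>2-henselian (in residue characteristic \<noteq> 2): every strict unit is a square.\<close>
definition two_henselian :: "('k::field \<Rightarrow> 'g::linordered_ab_group_add) \<Rightarrow> ('k \<Rightarrow> 'f::field) \<Rightarrow> bool" where
  "two_henselian v \<pi> \<longleftrightarrow> (\<forall>x. strict_unit v \<pi> x \<longrightarrow> (\<exists>y. x = y * y))"

definition subring_set :: "'k::field set \<Rightarrow> bool" where
  "subring_set A \<longleftrightarrow> 0 \<in> A \<and> 1 \<in> A \<and>
     (\<forall>x\<in>A. \<forall>y\<in>A. x + y \<in> A \<and> x * y \<in> A) \<and> (\<forall>x\<in>A. - x \<in> A)"

definition unit_vals :: "('k::field \<Rightarrow> 'g::linordered_ab_group_add) \<Rightarrow> 'k set \<Rightarrow> 'g set" where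
  "unit_vals v A = v ` {x \<in> A. x \<noteq> 0 \<and> inverse x \<in> A}"

definition same_sq_class :: "'g::linordered_ab_group_add \<Rightarrow> 'g \<Rightarrow> bool" where
  "same_sq_class g h \<longleftrightarrow> (\<exists>k. h - g = k + k)"

definition same_H2_class :: "'g::linordered_ab_group_add set \<Rightarrow> 'g \<Rightarrow> 'g \<Rightarrow> bool" where
  "same_H2_class H g h \<longleftrightarrow> (\<exists>k\<in>H. h - g = k + k)"

definition same_H_class :: "'g::linordered_ab_group_add set \<Rightarrow> 'g \<Rightarrow> 'g \<Rightarrow> bool" where
  "same_H_class H g h \<longleftrightarrow> h - g \<in> H"

definition qq_module :: "'a::comm_ring_1 set \<Rightarrow> 'a set \<Rightarrow> bool" where
  "qq_module R M \<longleftrightarrow> M \<subseteq> R \<and> 0 \<in> M \<and>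
     (\<forall>x\<in>M. \<forall>y\<in>M. x + y \<in> M) \<and> (\<forall>a\<in>R. \<forall>x\<in>M. a * a * x \<in> M)"

definition qq_modules :: "'a::comm_ring_1 set \<Rightarrow> 'a set set" where
  "qq_modules R = {M. qq_module R M}"

definition pseudo_angular ::
  "('k::field \<Rightarrow> 'g::linordered_ab_group_add) \<Rightarrow> ('k \<Rightarrow> 'f::field) \<Rightarrow> ('k \<Rightarrow> 'f) \<Rightarrow> bool" where
  "pseudo_angular v \<pi> pan \<longleftrightarrow>
     (\<forall>x. x \<noteq> 0 \<longrightarrow> pan x \<noteq> 0) \<and>
     (\<forall>u. u \<noteq> 0 \<and> v u = 0 \<longrightarrow> pan u = \<pi> u) \<and>
     (\<forall>u x. u \<noteq> 0 \<and> v u = 0 \<and> x \<noteq> 0 \<longrightarrow> pan (u * x) = \<pi> u * pan x) \<and>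
     (\<forall>g c. c \<noteq> 0 \<longrightarrow> (\<exists>w. w \<noteq> 0 \<and> v w = g \<and> pan w = c)) \<and>
     (\<forall>x1 x2. x1 \<noteq> 0 \<and> x2 \<noteq> 0 \<and> x1 + x2 \<noteq> 0 \<longrightarrow>
        (v x1 < v x2 \<longrightarrow> pan (x1 + x2) = pan x1) \<and>
        (v x1 = v x2 \<and> pan x1 + pan x2 \<noteq> 0 \<longrightarrow>
           v (x1 + x2) = v x1 \<and> pan (x1 + x2) = pan x1 + pan x2)) \<and>
     (\<forall>x y. x \<noteq> 0 \<and> y \<noteq> 0 \<and> same_sq_class (v x) (v y) \<and> pan x = pan y \<longrightarrow>
        (\<exists>u. u \<noteq> 0 \<and> y = u * u * x)) \<and>
     (\<forall>a u. a \<noteq> 0 \<and> u \<noteq> 0 \<longrightarrow> (\<exists>k. k \<noteq> 0 \<and> pan (a * u * u) = pan a * k * k))"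

definition index_set :: "('k::field \<Rightarrow> 'g::linordered_ab_group_add) \<Rightarrow> 'k set \<Rightarrow> 'g set" where
  "index_set v A = unit_vals v A \<union> {g. 0 \<le> g}"

definition fam_T ::
  "('k::field \<Rightarrow> 'g::linordered_ab_group_add) \<Rightarrow> 'k set \<Rightarrow> ('g \<Rightarrow> 'f::field set) set" where
  "fam_T v A = {M. M \<in> index_set v A \<rightarrow>\<^sub>E qq_modules (UNIV :: 'f set) \<and>
      (\<forall>g\<in>index_set v A. \<forall>h\<in>index_set v A.
         (same_H2_class (unit_vals v A) g h
          \<or> (g \<le> h \<and> same_sq_class g h)
          \<or> (M g = UNIV \<and> (same_H_class (unit_vals v A) g h \<or> g \<le> h)))
         \<longrightarrow> M g \<subseteq> M h)}"

definition Phi ::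
  "('k::field \<Rightarrow> 'g::linordered_ab_group_add) \<Rightarrow> ('k \<Rightarrow> 'f::field) \<Rightarrow> 'k set \<Rightarrow> 'f set \<Rightarrow> 'g \<Rightarrow> 'k set" where
  "Phi v pan A M g = {x \<in> A. x \<noteq> 0 \<and> same_sq_class (v x) g \<and>
      (same_H2_class (unit_vals v A) (v x) g \<or> g < v x) \<and> pan x \<in> M} \<union> {0}"

definition M_g ::
  "('k::field \<Rightarrow> 'g::linordered_ab_group_add) \<Rightarrow> ('k \<Rightarrow> 'f::field) \<Rightarrow> 'k set \<Rightarrow> 'g \<Rightarrow> 'f set" where
  "M_g v pan \<M> g = {pan x | x. x \<in> \<M> \<and> x \<noteq> 0 \<and> v x = g} \<union> {0}"

definition Theta ::
  "('k::field \<Rightarrow> 'g::linordered_ab_group_add) \<Rightarrow> ('k \<Rightarrow> 'f::field) \<Rightarrow> 'k set \<Rightarrow> 'k set \<Rightarrow> ('g \<Rightarrow> 'f set)" where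
  "Theta v pan A \<M> = (\<lambda>g\<in>index_set v A. M_g v pan \<M> g)"

definition Theta_inv ::
  "('k::field \<Rightarrow> 'g::linordered_ab_group_add) \<Rightarrow> ('k \<Rightarrow> 'f::field) \<Rightarrow> 'k set \<Rightarrow> ('g \<Rightarrow> 'f set) \<Rightarrow> 'k set" where
  "Theta_inv v pan A M = (\<Union>g\<in>index_set v A. Phi v pan A (M g) g)"

end

theory Submission
  imports Defs
begin

text \<open>A quasi-quadratic module \<M> of A is determined by its angular slices
  M_g(\<M>) = pan ` {x \<in> \<M>. v x = g}: by axiom (5) of the pseudo-angular map (the only place
  where 2-henselianity enters) nonzero elements with the same value and the same pseudo-angular
  component differ by a factor u^2 with v u = 0, and such u lie in A. Hence
  \<M> = {x \<in> A. x = 0 \<or> pan x \<in> M_{v x}(\<M>)}. For a family in T the union of the sets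
  Phi(M_g, g) is that same set, because the conditions of T give M_g \<subseteq> M_{v x} for
  x \<in> Phi(M_g, g); and these conditions are exactly what makes it a quasi-quadratic module:
  multiplying by a^2 moves the value by 2 v a, which lies in H^2 or is nonnegative, and adding two
  elements of equal value whose components cancel forces M_{v x} to contain c and -c, hence to be
  all of F by z c = ((z+1)/2)^2 c + ((z-1)/2)^2 (-c); a full slice then propagates to all larger
  values and along H.\<close>

lemma
  assumes "qq_module R M"
  shows qq_module_subset: "M \<subseteq> R"
    and qq_module_zero: "0 \<in> M"
    and qq_module_add: "x \<in> M \<Longrightarrow> y \<in> M \<Longrightarrow> x + y \<in> M"
    and qq_module_square_mult: "a \<in> R \<Longrightarrow> x \<in> M \<Longrightarrow> a * a * x \<in> M"
  using assms unfolding qq_module_def by blast+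

lemma qq_module_mult_mem_if_opposite:
  fixes M :: "'a::comm_ring_1 set"
  assumes M: "qq_module R M" and y: "y \<in> M" "- y \<in> M" and h: "2 * h = 1"
    and R: "(z + 1) * h \<in> R" "(z - 1) * h \<in> R"
  shows "z * y \<in> M"
proof -
  have "(z + 1) * h * ((z + 1) * h) * y + (z - 1) * h * ((z - 1) * h) * (- y) \<in> M"
    using M y R by (blast intro: qq_module_add qq_module_square_mult)
  moreover have "(z + 1) * h * ((z + 1) * h) * y + (z - 1) * h * ((z - 1) * h) * (- y)
    = (2 * h) * (2 * h) * (z * y)" by (simp add: algebra_simps)
  ultimately show ?thesis using h by simp
qed

lemma qq_module_UNIV_if_opposite:
  fixes M :: "'f::field set"
  assumes M: "qq_module UNIV M" and c: "c \<in> M" "- c \<in> M" "c \<noteq> 0" and two: "(2::'f) \<noteq> 0"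
  shows "M = UNIV"
proof -
  have "d / c * c \<in> M" for d
    using qq_module_mult_mem_if_opposite[OF M c(1,2), of "inverse 2" "d / c"] two by simp
  then show ?thesis using c(3) by auto
qed

lemma same_sq_class_refl: "same_sq_class g g"
  unfolding same_sq_class_def by (auto intro: exI[of _ 0])

lemma same_sq_class_sym: "same_sq_class g h \<Longrightarrow> same_sq_class h g"
  unfolding same_sq_class_def by (metis minus_add_distrib minus_diff_eq)

lemma same_H2_class_refl: "0 \<in> H \<Longrightarrow> same_H2_class H g g"
  unfolding same_H2_class_def by force

lemma same_H2_class_sym:
  "(\<And>k. k \<in> H \<Longrightarrow> - k \<in> H) \<Longrightarrow> same_H2_class H g h \<Longrightarrow> same_H2_class H h g"
  unfolding same_H2_class_def by (metis minus_add_distrib minus_diff_eq)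

definition family_compatible :: "'g::linordered_ab_group_add set \<Rightarrow> ('g \<Rightarrow> 'f set) \<Rightarrow> 'g \<Rightarrow> 'g \<Rightarrow> bool"
  where "family_compatible H M g h \<longleftrightarrow>
    same_H2_class H g h \<or> (g \<le> h \<and> same_sq_class g h) \<or> (M g = UNIV \<and> (same_H_class H g h \<or> g \<le> h))"

lemma fam_T_iff:
  "M \<in> fam_T v A \<longleftrightarrow> M \<in> index_set v A \<rightarrow>\<^sub>E qq_modules UNIV \<and>
    (\<forall>g\<in>index_set v A. \<forall>h\<in>index_set v A. family_compatible (unit_vals v A) M g h \<longrightarrow> M g \<subseteq> M h)"
  unfolding fam_T_def family_compatible_def by blast

lemma fam_T_qq_module: "M \<in> fam_T v A \<Longrightarrow> g \<in> index_set v A \<Longrightarrow> qq_module UNIV (M g)"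
  unfolding fam_T_def qq_modules_def by (auto dest: PiE_mem)

lemma fam_T_undefined: "M \<in> fam_T v A \<Longrightarrow> g \<notin> index_set v A \<Longrightarrow> M g = undefined"
  unfolding fam_T_iff by (auto intro: PiE_arb)

lemma fam_T_subset:
  "M \<in> fam_T v A \<Longrightarrow> g \<in> index_set v A \<Longrightarrow> h \<in> index_set v A \<Longrightarrow>
    family_compatible (unit_vals v A) M g h \<Longrightarrow> M g \<subseteq> M h"
  unfolding fam_T_iff by blast

locale valued_field =
  fixes v :: "'k::field \<Rightarrow> 'g::linordered_ab_group_add" and \<pi> :: "'k \<Rightarrow> 'f::field"
  assumes valuation: "valuation v" and residue_map: "residue_map v \<pi>"
begin

lemma v_mult: "x \<noteq> 0 \<Longrightarrow> y \<noteq> 0 \<Longrightarrow> v (x * y) = v x + v y"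
  using valuation unfolding valuation_def by blast

lemma v_add_ge_min: "x \<noteq> 0 \<Longrightarrow> y \<noteq> 0 \<Longrightarrow> x + y \<noteq> 0 \<Longrightarrow> min (v x) (v y) \<le> v (x + y)"
  using valuation unfolding valuation_def by blast

lemma v_surj: "\<exists>x. x \<noteq> 0 \<and> v x = g"
  using valuation unfolding valuation_def by blast

lemma v_one [simp]: "v 1 = 0"
  using v_mult[of 1 1] by simp

lemma v_inverse: "x \<noteq> 0 \<Longrightarrow> v (inverse x) = - v x"
  using v_mult[of x "inverse x"] by (simp add: eq_neg_iff_add_eq_0 add.commute)

lemma v_minus_one [simp]: "v (- 1) = 0"
  using v_mult[of "- 1" "- 1"] by simp

lemma v_minus [simp]: "v (- x) = v x"
  using v_mult[of "- 1" x] by (cases "x = 0") simp_all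

lemma v_mult_self_eq_0: "u \<noteq> 0 \<Longrightarrow> v (u * u) = 0 \<Longrightarrow> v u = 0"
  using v_mult[of u u] by simp

lemma v_add_eq_left:
  assumes x: "x \<noteq> 0" and y: "y \<noteq> 0" and xy: "x + y \<noteq> 0" and less: "v x < v y"
  shows "v (x + y) = v x"
proof (rule antisym)
  have "min (v (x + y)) (v (- y)) \<le> v (x + y + - y)"
    using x y xy by (intro v_add_ge_min) simp_all
  then show "v (x + y) \<le> v x"
    using less by (auto simp: min_def split: if_splits)
  show "v x \<le> v (x + y)"
    using v_add_ge_min[OF x y xy] less by simp
qed

lemma val_ring_iff: "x \<in> val_ring v \<longleftrightarrow> x = 0 \<or> 0 \<le> v x"
  by (simp add: val_ring_def)

lemma
  assumes "x \<in> val_ring v" "y \<in> val_ring v"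
  shows residue_add: "\<pi> (x + y) = \<pi> x + \<pi> y" and residue_mult: "\<pi> (x * y) = \<pi> x * \<pi> y"
  using residue_map assms unfolding residue_map_def by blast+

lemma residue_one [simp]: "\<pi> 1 = 1"
  using residue_map unfolding residue_map_def by blast

lemma residue_eq_0_iff: "x \<in> val_ring v \<Longrightarrow> \<pi> x = 0 \<longleftrightarrow> x = 0 \<or> 0 < v x"
  using residue_map unfolding residue_map_def by blast

lemma residue_zero [simp]: "\<pi> 0 = 0"
  using residue_eq_0_iff[of 0] by (simp add: val_ring_iff)

lemma residue_nonzero_imp_unit: "x \<in> val_ring v \<Longrightarrow> \<pi> x \<noteq> 0 \<Longrightarrow> x \<noteq> 0 \<and> v x = 0"
  using residue_eq_0_iff[of x] by (auto simp: val_ring_iff)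

lemma unit_with_residue: "c \<noteq> 0 \<Longrightarrow> \<exists>u. u \<noteq> 0 \<and> v u = 0 \<and> \<pi> u = c"
  using residue_map residue_nonzero_imp_unit unfolding residue_map_def by metis

lemma residue_minus_one [simp]: "\<pi> (- 1) = - 1"
  using residue_add[of 1 "- 1"] by (simp add: val_ring_iff eq_neg_iff_add_eq_0 add.commute)

lemma two_unit:
  assumes "(2::'f) \<noteq> 0"
  shows "(2::'k) \<noteq> 0" "v (2::'k) = 0"
proof -
  have one: "(1::'k) \<in> val_ring v" by (simp add: val_ring_iff)
  have "(2::'k) \<in> val_ring v"
    using v_add_ge_min[of 1 1] by (auto simp: val_ring_iff)
  moreover have "\<pi> (2::'k) \<noteq> 0"
    using residue_add[OF one one] assms by simp
  ultimately show "(2::'k) \<noteq> 0" "v (2::'k) = 0"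
    using residue_nonzero_imp_unit by blast+
qed

end

locale pseudo_angular_field = valued_field v \<pi>
  for v :: "'k::field \<Rightarrow> 'g::linordered_ab_group_add" and \<pi> :: "'k \<Rightarrow> 'f::field" +
  fixes pan :: "'k \<Rightarrow> 'f"
  assumes pseudo_angular: "pseudo_angular v \<pi> pan"
begin

lemmas pan_axioms = pseudo_angular[unfolded pseudo_angular_def]

lemma pan_nonzero: "x \<noteq> 0 \<Longrightarrow> pan x \<noteq> 0"
  using pan_axioms by blast

lemma pan_unit_mult: "u \<noteq> 0 \<Longrightarrow> v u = 0 \<Longrightarrow> x \<noteq> 0 \<Longrightarrow> pan (u * x) = \<pi> u * pan x"
  using pan_axioms by blast

lemma pan_surj: "c \<noteq> 0 \<Longrightarrow> \<exists>w. w \<noteq> 0 \<and> v w = g \<and> pan w = c"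
  using pan_axioms by blast

lemma pan_add_less:
  "x \<noteq> 0 \<Longrightarrow> y \<noteq> 0 \<Longrightarrow> x + y \<noteq> 0 \<Longrightarrow> v x < v y \<Longrightarrow> pan (x + y) = pan x"
  using pan_axioms by blast

lemma pan_add_eq:
  "x \<noteq> 0 \<Longrightarrow> y \<noteq> 0 \<Longrightarrow> x + y \<noteq> 0 \<Longrightarrow> v x = v y \<Longrightarrow> pan x + pan y \<noteq> 0 \<Longrightarrow>
    v (x + y) = v x \<and> pan (x + y) = pan x + pan y"
  using pan_axioms by blast

lemma pan_eq_imp_square_mult:
  "x \<noteq> 0 \<Longrightarrow> y \<noteq> 0 \<Longrightarrow> same_sq_class (v x) (v y) \<Longrightarrow> pan x = pan y \<Longrightarrow>
    \<exists>u. u \<noteq> 0 \<and> y = u * u * x"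
  using pan_axioms by blast

lemma pan_mult_square: "a \<noteq> 0 \<Longrightarrow> u \<noteq> 0 \<Longrightarrow> \<exists>k. k \<noteq> 0 \<and> pan (u * u * a) = k * k * pan a"
  using pan_axioms by (metis mult.commute mult.left_commute)

lemma pan_minus: "x \<noteq> 0 \<Longrightarrow> pan (- x) = - pan x"
  using pan_unit_mult[of "- 1" x] by simp

lemma pan_eq_imp_unit_square_mult:
  assumes x: "x \<noteq> 0" and y: "y \<noteq> 0" and v_eq: "v x = v y" and pan_eq: "pan x = pan y"
  shows "\<exists>u. u \<noteq> 0 \<and> v u = 0 \<and> y = u * u * x"
proof -
  obtain u where u: "u \<noteq> 0" "y = u * u * x"
    using pan_eq_imp_square_mult[OF x y _ pan_eq] v_eq same_sq_class_refl by metis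
  then have "v (u * u) = 0"
    using v_mult[of "u * u" x] x v_eq by simp
  then show ?thesis using u v_mult_self_eq_0 by blast
qed

lemma M_g_zero: "0 \<in> M_g v pan MM g"
  unfolding M_g_def by blast

lemma M_g_memI: "x \<in> MM \<Longrightarrow> x \<noteq> 0 \<Longrightarrow> pan x \<in> M_g v pan MM (v x)"
  unfolding M_g_def by blast

lemma M_g_nonzeroE:
  assumes "c \<in> M_g v pan MM g" "c \<noteq> 0"
  obtains x where "x \<in> MM" "x \<noteq> 0" "v x = g" "pan x = c"
  using assms unfolding M_g_def by blast

end

locale overring = pseudo_angular_field v \<pi> pan
  for v :: "'k::field \<Rightarrow> 'g::linordered_ab_group_add" and \<pi> :: "'k \<Rightarrow> 'f::field" and pan +
  fixes A :: "'k set"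
  assumes subring: "subring_set A"
    and val_ring_subset: "val_ring v \<subseteq> A"
    and two_nonzero: "(2::'f) \<noteq> 0"
begin

lemma
  shows A_zero: "0 \<in> A" and A_one: "1 \<in> A"
    and A_add: "x \<in> A \<Longrightarrow> y \<in> A \<Longrightarrow> x + y \<in> A"
    and A_mult: "x \<in> A \<Longrightarrow> y \<in> A \<Longrightarrow> x * y \<in> A"
    and A_minus: "x \<in> A \<Longrightarrow> - x \<in> A"
  using subring unfolding subring_set_def by blast+

lemma A_diff: "x \<in> A \<Longrightarrow> y \<in> A \<Longrightarrow> x - y \<in> A"
  using A_add A_minus by (metis diff_conv_add_uminus)

lemma mem_A_if_v_nonneg: "0 \<le> v x \<Longrightarrow> x \<in> A"
  using val_ring_subset by (auto simp: val_ring_iff)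

lemma mem_A_iff_v_mem_index_set:
  assumes x: "x \<noteq> 0"
  shows "x \<in> A \<longleftrightarrow> v x \<in> index_set v A"
proof (cases "0 \<le> v x")
  case True
  then show ?thesis using mem_A_if_v_nonneg unfolding index_set_def by blast
next
  case False
  have "x \<in> A \<longleftrightarrow> v x \<in> unit_vals v A"
  proof
    assume "x \<in> A"
    moreover have "inverse x \<in> A"
      using False v_inverse[OF x] by (intro mem_A_if_v_nonneg) simp
    ultimately show "v x \<in> unit_vals v A"
      using x unfolding unit_vals_def by blast
  next
    assume "v x \<in> unit_vals v A"
    then obtain y where y: "y \<in> A" "y \<noteq> 0" "v y = v x"
      unfolding unit_vals_def by auto
    have "v (x * inverse y) = 0"
      using x y v_mult[of x "inverse y"] v_inverse[of y] by simp
    then have "y * (x * inverse y) \<in> A"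
      by (intro A_mult[OF y(1)] mem_A_if_v_nonneg) simp
    moreover have "y * (x * inverse y) = x" using y(2) by (simp add: field_simps)
    ultimately show "x \<in> A" by simp
  qed
  then show ?thesis using False unfolding index_set_def by blast
qed

lemma index_set_obtain: "g \<in> index_set v A \<Longrightarrow> \<exists>y\<in>A. y \<noteq> 0 \<and> v y = g"
  using v_surj mem_A_iff_v_mem_index_set by metis

lemma zero_mem_unit_vals: "0 \<in> unit_vals v A"
  unfolding unit_vals_def using A_one by force

lemma unit_vals_minus: "k \<in> unit_vals v A \<Longrightarrow> - k \<in> unit_vals v A"
  unfolding unit_vals_def by (force simp: v_inverse)

lemma inverse_two_mem_A: "inverse (2::'k) \<in> A"
proof -
  have "v (inverse (2::'k)) = 0"
    using v_inverse[of 2] two_unit[OF two_nonzero] by simp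
  then show ?thesis by (metis mem_A_if_v_nonneg order_refl)
qed

lemma qq_module_A_mult_mem_if_opposite:
  assumes "qq_module A M" "y \<in> M" "- y \<in> M" "z \<in> A"
  shows "z * y \<in> M"
proof (rule qq_module_mult_mem_if_opposite[OF assms(1-3)])
  show "2 * inverse 2 = (1::'k)"
    using two_unit[OF two_nonzero] by simp
  show "(z + 1) * inverse 2 \<in> A" "(z - 1) * inverse 2 \<in> A"
    using assms(4) inverse_two_mem_A by (blast intro: A_mult A_add A_diff A_one)+
qed

lemma mem_module_if_pan_mem_M_g:
  assumes MM: "qq_module A MM" and x: "x \<noteq> 0" and pan_x: "pan x \<in> M_g v pan MM (v x)"
  shows "x \<in> MM"
proof -
  obtain y where y: "y \<in> MM" "y \<noteq> 0" "v y = v x" "pan y = pan x"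
    using M_g_nonzeroE[OF pan_x pan_nonzero[OF x]] by metis
  then obtain u where u: "v u = 0" "x = u * u * y"
    using pan_eq_imp_unit_square_mult x by metis
  then show ?thesis
    using qq_module_square_mult[OF MM mem_A_if_v_nonneg y(1)] by simp
qed

lemma qq_module_M_g:
  assumes MM: "qq_module A MM"
  shows "qq_module UNIV (M_g v pan MM g)"
proof -
  have add: "c + d \<in> M_g v pan MM g" if c: "c \<in> M_g v pan MM g" and d: "d \<in> M_g v pan MM g" for c d
  proof (cases "c = 0 \<or> d = 0 \<or> c + d = 0")
    case True
    then show ?thesis using c d M_g_zero by auto
  next
    case False
    obtain x where x: "x \<in> MM" "x \<noteq> 0" "v x = g" "pan x = c"
      using M_g_nonzeroE[OF c] False by metis
    obtain y where y: "y \<in> MM" "y \<noteq> 0" "v y = g" "pan y = d"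
      using M_g_nonzeroE[OF d] False by metis
    have "x + y \<noteq> 0"
      using False x y pan_minus[of x] by (metis add.inverse_unique add_eq_0_iff2)
    then have "v (x + y) = g" "pan (x + y) = c + d"
      using pan_add_eq[of x y] x y False by auto
    moreover have "x + y \<in> MM" using qq_module_add[OF MM x(1) y(1)] .
    ultimately show ?thesis using M_g_memI \<open>x + y \<noteq> 0\<close> by metis
  qed
  have square_mult: "a * a * c \<in> M_g v pan MM g" if c: "c \<in> M_g v pan MM g" for a c
  proof (cases "a = 0 \<or> c = 0")
    case True
    then show ?thesis using M_g_zero by auto
  next
    case False
    obtain x where x: "x \<in> MM" "x \<noteq> 0" "v x = g" "pan x = c"
      using M_g_nonzeroE[OF c] False by metis
    obtain u where u: "u \<noteq> 0" "v u = 0" "\<pi> u = a"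
      using unit_with_residue False by blast
    have uu: "u * u \<noteq> 0" "v (u * u) = 0" "u \<in> val_ring v"
      using u v_mult[of u u] by (simp_all add: val_ring_iff)
    have "pan (u * u * x) = a * a * c"
      using pan_unit_mult[of "u * u" x] residue_mult[of u u] uu x u by simp
    moreover have "v (u * u * x) = g"
      using v_mult[of "u * u" x] uu x by simp
    moreover have "u * u * x \<in> MM"
      using qq_module_square_mult[OF MM mem_A_if_v_nonneg x(1)] u by simp
    moreover have "u * u * x \<noteq> 0" using uu x by simp
    ultimately show ?thesis using M_g_memI by metis
  qed
  show ?thesis
    unfolding qq_module_def using add square_mult M_g_zero by blast
qed

lemma M_g_subset_shift_square:
  assumes MM: "qq_module A MM" and y: "y \<in> A" "y \<noteq> 0"
  shows "M_g v pan MM g \<subseteq> M_g v pan MM (g + (v y + v y))"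
proof
  fix c assume c: "c \<in> M_g v pan MM g"
  show "c \<in> M_g v pan MM (g + (v y + v y))"
  proof (cases "c = 0")
    case True
    then show ?thesis using M_g_zero by simp
  next
    case False
    obtain x where x: "x \<in> MM" "x \<noteq> 0" "v x = g" "pan x = c"
      using M_g_nonzeroE[OF c False] by metis
    obtain k where k: "k \<noteq> 0" "pan (y * y * x) = k * k * c"
      using pan_mult_square[OF x(2) y(2)] x by metis
    have "v (y * y * x) = g + (v y + v y)"
      using v_mult[of "y * y" x] v_mult[of y y] x y by (simp add: ac_simps)
    then have "k * k * c \<in> M_g v pan MM (g + (v y + v y))"
      using M_g_memI[OF qq_module_square_mult[OF MM y(1) x(1)]] x y k by simp
    then have "inverse k * inverse k * (k * k * c) \<in> M_g v pan MM (g + (v y + v y))"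
      using qq_module_square_mult[OF qq_module_M_g[OF MM]] by blast
    then show ?thesis using k by (simp add: field_simps)
  qed
qed

lemma M_g_UNIV_shift:
  assumes MM: "qq_module A MM" and full: "M_g v pan MM g = UNIV" and z: "z \<in> A" "z \<noteq> 0"
  shows "M_g v pan MM (g + v z) = UNIV"
proof -
  have "c \<in> M_g v pan MM (g + v z)" if "c \<noteq> 0" for c
  proof -
    obtain w where w: "w \<noteq> 0" "v w = g + v z" "pan w = c"
      using pan_surj \<open>c \<noteq> 0\<close> by blast
    define y where "y = w * inverse z"
    have y: "y \<noteq> 0" "v y = g" "w = z * y"
      using w z v_mult[of w "inverse z"] v_inverse[of z] by (simp_all add: y_def)
    have "y \<in> MM" "- y \<in> MM"
      using y full by (simp_all add: mem_module_if_pan_mem_M_g[OF MM])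
    then have "w \<in> MM"
      using qq_module_A_mult_mem_if_opposite[OF MM _ _ z(1)] y(3) by simp
    then show ?thesis using M_g_memI w by metis
  qed
  then show ?thesis using M_g_zero by (metis UNIV_eq_I)
qed

lemma M_g_subset_if_compatible:
  assumes MM: "qq_module A MM" and compatible: "family_compatible (unit_vals v A) (M_g v pan MM) g h"
  shows "M_g v pan MM g \<subseteq> M_g v pan MM h"
proof -
  have shift: "M_g v pan MM g \<subseteq> M_g v pan MM h"
    if k: "k \<in> index_set v A" and h: "h - g = k + k" for k
  proof -
    obtain y where "y \<in> A" "y \<noteq> 0" "v y = k"
      using index_set_obtain[OF k] by blast
    moreover have "h = g + (k + k)" using h by (simp add: algebra_simps)
    ultimately show ?thesis using M_g_subset_shift_square[OF MM] by blast
  qed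
  consider (H2) "same_H2_class (unit_vals v A) g h"
    | (sq) "g \<le> h" "same_sq_class g h"
    | (full) "M_g v pan MM g = UNIV" "same_H_class (unit_vals v A) g h \<or> g \<le> h"
    using compatible unfolding family_compatible_def by blast
  then show ?thesis
  proof cases
    case H2
    then show ?thesis using shift unfolding same_H2_class_def index_set_def by blast
  next
    case sq
    then obtain k where k: "h - g = k + k" unfolding same_sq_class_def by blast
    with sq(1) have "0 \<le> k"
      by (metis diff_ge_0_iff_ge zero_le_double_add_iff_zero_le_single_add)
    then show ?thesis using shift[OF _ k] by (simp add: index_set_def)
  next
    case full
    then have "h - g \<in> index_set v A"
      unfolding same_H_class_def index_set_def by auto
    then obtain z where z: "z \<in> A" "z \<noteq> 0" "v z = h - g"
      using index_set_obtain by blast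
    have "M_g v pan MM (g + v z) = UNIV" by (rule M_g_UNIV_shift[OF MM full(1) z(1,2)])
    then show ?thesis using z(3) by simp
  qed
qed

lemma Theta_mem_fam_T:
  assumes MM: "qq_module A MM"
  shows "Theta v pan A MM \<in> fam_T v A"
proof -
  have "family_compatible (unit_vals v A) (Theta v pan A MM) g h \<longleftrightarrow>
      family_compatible (unit_vals v A) (M_g v pan MM) g h" if "g \<in> index_set v A" for g h
    using that by (simp add: family_compatible_def Theta_def)
  then show ?thesis
    using M_g_subset_if_compatible[OF MM] qq_module_M_g[OF MM]
    by (auto simp: fam_T_iff Theta_def qq_modules_def)
qed

definition module_of_family :: "('g \<Rightarrow> 'f set) \<Rightarrow> 'k set"
  where "module_of_family M = {x \<in> A. x = 0 \<or> pan x \<in> M (v x)}"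

lemma zero_mem_module_of_family: "0 \<in> module_of_family M"
  using A_zero by (simp add: module_of_family_def)

lemma mem_module_of_family_iff:
  "x \<noteq> 0 \<Longrightarrow> x \<in> module_of_family M \<longleftrightarrow> x \<in> A \<and> pan x \<in> M (v x)"
  by (simp add: module_of_family_def)

lemma Theta_inv_eq_module_of_family:
  assumes M: "M \<in> fam_T v A"
  shows "Theta_inv v pan A M = module_of_family M"
proof (intro equalityI subsetI)
  fix x assume "x \<in> Theta_inv v pan A M"
  then obtain g where g: "g \<in> index_set v A" and x: "x \<in> Phi v pan A (M g) g"
    unfolding Theta_inv_def by blast
  show "x \<in> module_of_family M"
  proof (cases "x = 0")
    case True
    then show ?thesis using zero_mem_module_of_family by simp
  next
    case False
    then have xA: "x \<in> A" and sq: "same_sq_class (v x) g"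
      and cls: "same_H2_class (unit_vals v A) (v x) g \<or> g < v x" and pan_x: "pan x \<in> M g"
      using x unfolding Phi_def by blast+
    have "family_compatible (unit_vals v A) M g (v x)"
      using cls same_sq_class_sym[OF sq] same_H2_class_sym[OF unit_vals_minus]
      unfolding family_compatible_def by auto
    then have "M g \<subseteq> M (v x)"
      using fam_T_subset[OF M g] mem_A_iff_v_mem_index_set[OF False] xA by blast
    then have "pan x \<in> M (v x)" using pan_x by blast
    then show ?thesis using xA False by (simp add: mem_module_of_family_iff)
  qed
next
  fix x assume x: "x \<in> module_of_family M"
  show "x \<in> Theta_inv v pan A M"
  proof (cases "x = 0")
    case True
    then show ?thesis unfolding Theta_inv_def Phi_def index_set_def by auto
  next
    case False
    then have "x \<in> A" "pan x \<in> M (v x)" "v x \<in> index_set v A"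
      using x mem_A_iff_v_mem_index_set by (auto simp: mem_module_of_family_iff)
    moreover have "same_sq_class (v x) (v x)" "same_H2_class (unit_vals v A) (v x) (v x)"
      using same_sq_class_refl same_H2_class_refl[OF zero_mem_unit_vals] by blast+
    ultimately show ?thesis
      unfolding Theta_inv_def Phi_def using False by blast
  qed
qed

lemma module_of_family_square_mult:
  assumes M: "M \<in> fam_T v A" and a: "a \<in> A" and x: "x \<in> module_of_family M"
  shows "a * a * x \<in> module_of_family M"
proof (cases "a = 0 \<or> x = 0")
  case True
  then show ?thesis using zero_mem_module_of_family by auto
next
  case False
  have xA: "x \<in> A" and pan_x: "pan x \<in> M (v x)"
    using x False by (simp_all add: mem_module_of_family_iff)
  have ax: "a * a * x \<in> A" "a * a * x \<noteq> 0"
    using A_mult a xA False by auto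
  have idx: "v x \<in> index_set v A" "v (a * a * x) \<in> index_set v A"
    using mem_A_iff_v_mem_index_set xA ax False by auto
  have val: "v (a * a * x) - v x = v a + v a"
    using v_mult[of "a * a" x] v_mult[of a a] False by simp
  have "family_compatible (unit_vals v A) M (v x) (v (a * a * x))"
  proof (cases "v a \<in> unit_vals v A")
    case True
    then show ?thesis using val unfolding family_compatible_def same_H2_class_def by blast
  next
    case False
    then have "0 \<le> v a"
      using mem_A_iff_v_mem_index_set[of a] a \<open>\<not> (a = 0 \<or> x = 0)\<close> by (auto simp: index_set_def)
    then have "v x \<le> v (a * a * x)"
      using val by (metis add_nonneg_nonneg diff_ge_0_iff_ge)
    then show ?thesis using val unfolding family_compatible_def same_sq_class_def by blast
  qed
  then have sub: "M (v x) \<subseteq> M (v (a * a * x))"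
    using fam_T_subset[OF M idx] by blast
  obtain k where k: "k \<noteq> 0" "pan (a * a * x) = k * k * pan x"
    using pan_mult_square False by blast
  have "k * k * pan x \<in> M (v x)"
    using qq_module_square_mult[OF fam_T_qq_module[OF M idx(1)] _ pan_x] by simp
  then have "pan (a * a * x) \<in> M (v (a * a * x))" using sub k(2) by auto
  then show ?thesis using ax by (simp add: mem_module_of_family_iff)
qed

lemma module_of_family_add:
  assumes M: "M \<in> fam_T v A" and x: "x \<in> module_of_family M" and y: "y \<in> module_of_family M"
  shows "x + y \<in> module_of_family M"
proof -
  have add_less: "x' + y' \<in> module_of_family M"
    if "x' \<in> module_of_family M" "y' \<in> module_of_family M"
      "x' \<noteq> 0" "y' \<noteq> 0" "x' + y' \<noteq> 0" "v x' < v y'" for x' y'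
    using that v_add_eq_left pan_add_less A_add by (simp add: mem_module_of_family_iff)
  consider "x = 0 \<or> y = 0 \<or> x + y = 0"
    | (less) "x \<noteq> 0" "y \<noteq> 0" "x + y \<noteq> 0" "v x < v y"
    | (greater) "x \<noteq> 0" "y \<noteq> 0" "x + y \<noteq> 0" "v y < v x"
    | (equal) "x \<noteq> 0" "y \<noteq> 0" "x + y \<noteq> 0" "v x = v y"
    using linorder_less_linear[of "v x" "v y"] by blast
  then show ?thesis
  proof cases
    case 1
    then show ?thesis using x y zero_mem_module_of_family by auto
  next
    case less
    then show ?thesis using add_less x y by blast
  next
    case greater
    then show ?thesis using add_less[OF y x] by (simp add: add.commute)
  next
    case equal
    have A: "x \<in> A" "x + y \<in> A" and pan_x: "pan x \<in> M (v x)" and pan_y: "pan y \<in> M (v x)"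
      using x y equal A_add by (simp_all add: mem_module_of_family_iff)
    have idx: "v x \<in> index_set v A" "v (x + y) \<in> index_set v A"
      using A equal mem_A_iff_v_mem_index_set by blast+
    note Mx = fam_T_qq_module[OF M idx(1)]
    show ?thesis
    proof (cases "pan x + pan y = 0")
      case False
      then have "v (x + y) = v x" "pan (x + y) = pan x + pan y"
        using pan_add_eq equal by blast+
      moreover have "pan x + pan y \<in> M (v x)"
        using qq_module_add[OF Mx pan_x pan_y] .
      ultimately show ?thesis using A equal by (simp add: mem_module_of_family_iff)
    next
      case True
      then have "- pan x \<in> M (v x)"
        using pan_y by (metis add.commute eq_neg_iff_add_eq_0)
      then have full: "M (v x) = UNIV"
        using qq_module_UNIV_if_opposite[OF Mx pan_x _ pan_nonzero two_nonzero] equal by blast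
      have "v x \<le> v (x + y)"
        using v_add_ge_min[of x y] equal by simp
      then have "M (v x) \<subseteq> M (v (x + y))"
        using fam_T_subset[OF M idx] full unfolding family_compatible_def by blast
      then have "pan (x + y) \<in> M (v (x + y))" using full by auto
      then show ?thesis using A equal by (simp add: mem_module_of_family_iff)
    qed
  qed
qed

lemma qq_module_module_of_family:
  assumes M: "M \<in> fam_T v A"
  shows "qq_module A (module_of_family M)"
proof -
  have "module_of_family M \<subseteq> A" by (auto simp: module_of_family_def)
  then show ?thesis unfolding qq_module_def
    using module_of_family_add[OF M] module_of_family_square_mult[OF M] zero_mem_module_of_family
    by blast
qed

lemma Theta_module_of_family:
  assumes M: "M \<in> fam_T v A"
  shows "Theta v pan A (module_of_family M) = M"
proof
  fix g
  show "Theta v pan A (module_of_family M) g = M g"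
  proof (cases "g \<in> index_set v A")
    case False
    then show ?thesis by (simp add: Theta_def fam_T_undefined[OF M False])
  next
    case True
    have "M_g v pan (module_of_family M) g = M g"
    proof (intro equalityI subsetI)
      fix c assume c: "c \<in> M_g v pan (module_of_family M) g"
      show "c \<in> M g"
      proof (cases "c = 0")
        case True
        then show ?thesis using qq_module_zero[OF fam_T_qq_module[OF M \<open>g \<in> index_set v A\<close>]] by simp
      next
        case False
        then obtain x where "x \<in> module_of_family M" "x \<noteq> 0" "v x = g" "pan x = c"
          using M_g_nonzeroE[OF c] by metis
        then show ?thesis by (simp add: mem_module_of_family_iff)
      qed
    next
      fix c assume c: "c \<in> M g"
      show "c \<in> M_g v pan (module_of_family M) g"
      proof (cases "c = 0")
        case True
        then show ?thesis using M_g_zero by simp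
      next
        case False
        obtain w where w: "w \<noteq> 0" "v w = g" "pan w = c"
          using pan_surj False by blast
        moreover have "w \<in> A"
          using mem_A_iff_v_mem_index_set[OF w(1)] w(2) \<open>g \<in> index_set v A\<close> by blast
        ultimately have "w \<in> module_of_family M"
          using c by (simp add: mem_module_of_family_iff)
        then show ?thesis using M_g_memI w by metis
      qed
    qed
    then show ?thesis using True by (simp add: Theta_def)
  qed
qed

lemma module_of_family_Theta:
  assumes MM: "qq_module A MM"
  shows "module_of_family (Theta v pan A MM) = MM"
proof (intro equalityI subsetI)
  fix x assume x: "x \<in> module_of_family (Theta v pan A MM)"
  show "x \<in> MM"
  proof (cases "x = 0")
    case True
    then show ?thesis using qq_module_zero[OF MM] by simp
  next
    case False
    then have "pan x \<in> M_g v pan MM (v x)"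
      using x mem_A_iff_v_mem_index_set[OF False] by (auto simp: mem_module_of_family_iff Theta_def)
    then show ?thesis using mem_module_if_pan_mem_M_g[OF MM False] by blast
  qed
next
  fix x assume x: "x \<in> MM"
  then have "x \<in> A" using qq_module_subset[OF MM] by blast
  then show "x \<in> module_of_family (Theta v pan A MM)"
    using x M_g_memI mem_A_iff_v_mem_index_set
    by (cases "x = 0") (simp_all add: zero_mem_module_of_family mem_module_of_family_iff Theta_def)
qed

lemma Theta_inv_mem_qq_modules: "M \<in> fam_T v A \<Longrightarrow> Theta_inv v pan A M \<in> qq_modules A"
  using Theta_inv_eq_module_of_family qq_module_module_of_family by (simp add: qq_modules_def)

lemma Theta_Theta_inv: "M \<in> fam_T v A \<Longrightarrow> Theta v pan A (Theta_inv v pan A M) = M"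
  using Theta_inv_eq_module_of_family Theta_module_of_family by simp

lemma Theta_inv_Theta: "MM \<in> qq_modules A \<Longrightarrow> Theta_inv v pan A (Theta v pan A MM) = MM"
  using Theta_mem_fam_T Theta_inv_eq_module_of_family module_of_family_Theta
  by (simp add: qq_modules_def)

end

theorem mainTheorem10:
  fixes v :: "'k::field \<Rightarrow> 'g::linordered_ab_group_add"
    and \<pi> :: "'k \<Rightarrow> 'f::field"
    and pan :: "'k \<Rightarrow> 'f"
    and A :: "'k set"
  assumes val: "valuation v"
    and res: "residue_map v \<pi>"
    and char: "(2::'f) \<noteq> 0"
    and hens: "two_henselian v \<pi>"
    and pan: "pseudo_angular v \<pi> pan"
    and subA: "subring_set A"
    and BA: "val_ring v \<subseteq> A"
  shows "bij_betw (Theta v pan A) (qq_modules A) (fam_T v A)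
    \<and> (\<forall>M\<in>fam_T v A. Theta_inv v pan A M \<in> qq_modules A \<and> Theta v pan A (Theta_inv v pan A M) = M)
    \<and> (\<forall>\<M>\<in>qq_modules A. Theta_inv v pan A (Theta v pan A \<M>) = \<M>)"
proof -
  interpret overring v \<pi> pan A
    by unfold_locales (rule val res pan subA BA char)+
  have "bij_betw (Theta v pan A) (qq_modules A) (fam_T v A)"
    by (rule bij_betw_byWitness[where f' = "Theta_inv v pan A"])
      (use Theta_inv_Theta Theta_Theta_inv Theta_mem_fam_T Theta_inv_mem_qq_modules
        in \<open>auto simp: qq_modules_def\<close>)
  then show ?thesis
    using Theta_inv_mem_qq_modules Theta_Theta_inv Theta_inv_Theta by blast
qed

end
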